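(* Let $T\ge K\ge2$, $0<V\le T/K$, and suppose all $N=T/W$ windows have the same size $W$. Let $c=\frac18-\frac{\sqrt{\log(4/3)}}8$. Then for every policy $\pi$: if $W\le K^{1/3}(T/V)^{2/3}$, $R^\pi(T;W,V)\ge\frac c3(KV)^{1/3}T^{2/3}$; and if $W\ge K^{1/3}(T/V)^{2/3}$, $R^\pi(T;W,V)\ge c\,T\sqrt{K/W}$.
   Context: Bandit model: arms $[K]$, horizon $T$; in period $t$ arm $k$ has reward $Y_{t,k}\in[0,1]$ with mean $\mu_{t,k}\in[0,1]$, independent across periods; a (possibly randomized) policy picks $A_t$ using only past actions and observed rewards and observes $Y_{t,A_t}$. $\log$ is natural log. Windows are consecutive blocks $\mathcal W_j$ of $W$ periods partitioning $[T]$; $\mu^*_{\mathcal W_j}=\frac1W\max_k\sum_{t\in\mathcal W_j}\mu_{t,k}$. Regret $R^\pi(T;W,\{\mu\})=\sum_j W\mu^*_{\mathcal W_j}-\mathbb E[\sum_t\mu_{t,A_t}]$, and $R^\pi(T;W,V)$ is its supremum over all mean sequences in $[0,1]^{T\times K}$ with $\sum_{t=1}^{T-1}\max_k|\mu_{t,k}-\mu_{t+1,k}|\le V$ and all reward distributions on $[0,1]$ with those means. *)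

theory Defs
  imports "HOL-Probability.Probability"
begin

text \<open>Arms are 0..K-1, periods are 0..T-1 (0-indexed versions of [K], [T]).
  A history is the list of (action, observed reward) pairs of past periods.\<close>

type_synonym history = "(nat \<times> real) list"
type_synonym policy = "history \<Rightarrow> nat pmf"

definition valid_policy :: "nat \<Rightarrow> policy \<Rightarrow> bool" where
  "valid_policy K \<pi> \<longleftrightarrow> (\<forall>h. set_pmf (\<pi> h) \<subseteq> {..<K})"

text \<open>Reward distributions: D t k is the distribution of Y_{t,k} (support in [0,1]).\<close>

definition mean :: "real pmf \<Rightarrow> real" where
  "mean p = measure_pmf.expectation p (\<lambda>y. y)"

text \<open>Distribution of the history after t periods: rewards independent across periods.\<close>

primrec traj :: "policy \<Rightarrow> (nat \<Rightarrow> nat \<Rightarrow> real pmf) \<Rightarrow> nat \<Rightarrow> history pmf" where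
  "traj \<pi> D 0 = return_pmf []"
| "traj \<pi> D (Suc t) =
     bind_pmf (traj \<pi> D t) (\<lambda>h. bind_pmf (\<pi> h) (\<lambda>a.
       bind_pmf (D t a) (\<lambda>y. return_pmf (h @ [(a, y)]))))"

definition exp_collected :: "policy \<Rightarrow> (nat \<Rightarrow> nat \<Rightarrow> real pmf) \<Rightarrow> nat \<Rightarrow> real" where
  "exp_collected \<pi> D T =
     measure_pmf.expectation (traj \<pi> D T) (\<lambda>h. \<Sum>i<T. mean (D i (fst (h ! i))))"

text \<open>Windows W_j = {jW ..< (j+1)W}, j < T div W; W * mu^*_{W_j} = max_k sum_{t in W_j} mu_{t,k}.\<close>
definition window_regret ::
  "nat \<Rightarrow> nat \<Rightarrow> nat \<Rightarrow> policy \<Rightarrow> (nat \<Rightarrow> nat \<Rightarrow> real pmf) \<Rightarrow> real" where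
  "window_regret K T W \<pi> D =
     (\<Sum>j< T div W. Max ((\<lambda>k. \<Sum>t\<in>{j*W..<(j+1)*W}. mean (D t k)) ` {..<K}))
     - exp_collected \<pi> D T"

definition variation :: "nat \<Rightarrow> nat \<Rightarrow> (nat \<Rightarrow> nat \<Rightarrow> real pmf) \<Rightarrow> real" where
  "variation K T D =
     (\<Sum>t< T - 1. Max ((\<lambda>k. \<bar>mean (D t k) - mean (D (Suc t) k)\<bar>) ` {..<K}))"

definition admissible :: "nat \<Rightarrow> nat \<Rightarrow> real \<Rightarrow> (nat \<Rightarrow> nat \<Rightarrow> real pmf) \<Rightarrow> bool" where
  "admissible K T V D \<longleftrightarrow> (\<forall>t k. set_pmf (D t k) \<subseteq> {0..1}) \<and> variation K T D \<le> V"

definition worst_regret :: "nat \<Rightarrow> nat \<Rightarrow> nat \<Rightarrow> real \<Rightarrow> policy \<Rightarrow> real" where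
  "worst_regret K T W V \<pi> = Sup {window_regret K T W \<pi> D | D. admissible K T V D}"

end

theory Submission
  imports Defs
begin

text \<open>Cut the horizon into blocks of length \<open>L\<close>, a multiple of \<open>W\<close>. In each block one arm,
  chosen by the adversary, has mean \<open>1/2 + \<epsilon>\<close> with \<open>\<epsilon> = \<surd>(K/L)/4\<close> and all others mean
  \<open>1/2\<close>, so the variation is at most \<open>\<epsilon>T/L\<close>. A change of measure from the environment with all
  means \<open>1/2\<close> (Gibbs' variational inequality plus Hoeffding's lemma) shows that within a block of
  \<open>n \<le> L\<close> periods the expected pulls of the good arm, summed over its \<open>K\<close> possible positions,
  are at most \<open>n (1 + \<surd>ln(4/3) K/2)\<close>. Hence some position leaves the good arm pulled in at
  most a \<open>(1 + \<surd>ln(4/3))/2\<close> fraction of the block; fixing the positions block by block makes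
  the regret at least \<open>(1 - \<surd>ln(4/3))/8 \<cdot> T \<surd>(K/L)\<close>. Finally \<open>L = W\<close> when \<open>W\<close> exceeds
  \<open>A = K\<^sup>1\<^sup>/\<^sup>3 (T/V)\<^sup>2\<^sup>/\<^sup>3\<close>, and otherwise \<open>L\<close> is a multiple of \<open>W\<close> in \<open>[A, 2A]\<close>.\<close>

definition bernoulli_reward :: "real \<Rightarrow> real pmf" where
  "bernoulli_reward p = map_pmf (\<lambda>b. if b then 1 else 0) (bernoulli_pmf p)"

lemma set_pmf_bernoulli_reward: "set_pmf (bernoulli_reward p) \<subseteq> {0, 1}"
  by (auto simp: bernoulli_reward_def)

lemma pmf_bernoulli_reward:
  assumes "0 \<le> p" "p \<le> 1"
  shows "pmf (bernoulli_reward p) 1 = p" and "pmf (bernoulli_reward p) 0 = 1 - p"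
proof -
  have inj: "inj (\<lambda>b::bool. if b then (1::real) else 0)"
    by (auto simp: inj_def split: if_splits)
  show "pmf (bernoulli_reward p) 1 = p" "pmf (bernoulli_reward p) 0 = 1 - p"
    using pmf_map_inj'[OF inj, of "bernoulli_pmf p" True] pmf_map_inj'[OF inj, of "bernoulli_pmf p" False]
      assms by (simp_all add: bernoulli_reward_def)
qed

lemma mean_bernoulli_reward:
  assumes "0 \<le> p" "p \<le> 1"
  shows "mean (bernoulli_reward p) = p"
  unfolding mean_def
  by (subst integral_measure_pmf[of "{0, 1}"])
     (use set_pmf_bernoulli_reward[of p] in \<open>auto simp: pmf_bernoulli_reward[OF assms]\<close>)

lemma mean_bounds:
  assumes "set_pmf p \<subseteq> {0..1}"
  shows "0 \<le> mean p" and "mean p \<le> 1"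
proof -
  have bounded: "AE y in measure_pmf p. 0 \<le> y \<and> y \<le> 1"
    using assms by (auto simp: AE_measure_pmf_iff)
  then have "integrable (measure_pmf p) (\<lambda>y. y)"
    by (intro measure_pmf.integrable_const_bound[where B=1]) auto
  with bounded show "0 \<le> mean p" "mean p \<le> 1"
    unfolding mean_def by (auto intro: integral_nonneg_AE measure_pmf.integral_le_const)
qed

definition binary_rewards :: "(nat \<Rightarrow> nat \<Rightarrow> real pmf) \<Rightarrow> bool" where
  "binary_rewards D \<longleftrightarrow> (\<forall>t a. set_pmf (D t a) \<subseteq> {0, 1})"

lemma valid_policy_append: "valid_policy K \<pi> \<Longrightarrow> valid_policy K (\<lambda>h'. \<pi> (h @ h'))"
  by (simp add: valid_policy_def)

lemma binary_rewards_shift: "binary_rewards D \<Longrightarrow> binary_rewards (\<lambda>t. D (m + t))"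
  by (simp add: binary_rewards_def)

definition histories :: "nat \<Rightarrow> nat \<Rightarrow> history set" where
  "histories K n = {h. set h \<subseteq> {..<K} \<times> {0, 1} \<and> length h = n}"

lemma finite_histories: "finite (histories K n)"
  unfolding histories_def by (rule finite_lists_length_eq) auto

lemma set_pmf_traj:
  assumes "valid_policy K \<pi>" "binary_rewards D"
  shows "set_pmf (traj \<pi> D n) \<subseteq> histories K n"
proof (induction n)
  case 0
  then show ?case by (simp add: histories_def)
next
  case (Suc n)
  show ?case
  proof
    fix h assume "h \<in> set_pmf (traj \<pi> D (Suc n))"
    then obtain h0 a y where "h0 \<in> set_pmf (traj \<pi> D n)" "a \<in> set_pmf (\<pi> h0)"
      "y \<in> set_pmf (D n a)" "h = h0 @ [(a, y)]"
      by (auto simp: set_bind_pmf)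
    moreover have "y \<in> {0, 1}" "a < K"
      using assms \<open>y \<in> set_pmf (D n a)\<close> \<open>a \<in> set_pmf (\<pi> h0)\<close>
      unfolding valid_policy_def binary_rewards_def by blast+
    ultimately show "h \<in> histories K (Suc n)"
      using Suc unfolding histories_def by auto
  qed
qed

lemma length_of_traj:
  assumes "valid_policy K \<pi>" "binary_rewards D"
    and "h \<in> set_pmf (traj \<pi> D n)"
  shows "length h = n"
  using set_pmf_traj[OF assms(1,2)] assms(3) by (auto simp: histories_def)

lemma finite_set_pmf_traj:
  assumes "valid_policy K \<pi>" "binary_rewards D"
  shows "finite (set_pmf (traj \<pi> D n))"
  by (rule finite_subset[OF set_pmf_traj[OF assms] finite_histories])

lemma integrable_traj:
  assumes "valid_policy K \<pi>" "binary_rewards D"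
  shows "integrable (measure_pmf (traj \<pi> D n)) (f :: history \<Rightarrow> real)"
  by (rule integrable_measure_pmf_finite[OF finite_set_pmf_traj[OF assms]])

lemma expectation_bind_pmf_finite:
  fixes h :: "'b \<Rightarrow> real"
  assumes "finite A" "\<And>x. x \<in> A \<Longrightarrow> finite (set_pmf (f x))" "set_pmf p \<subseteq> A"
  shows "measure_pmf.expectation (p \<bind> f) h
       = measure_pmf.expectation p (\<lambda>x. measure_pmf.expectation (f x) h)"
proof -
  have "measure_pmf.expectation p (\<lambda>x. measure_pmf.expectation (f x) h)
      = (\<Sum>a\<in>A. pmf p a *\<^sub>R measure_pmf.expectation (f a) h)"
    by (rule integral_measure_pmf[OF assms(1)]) (use assms(3) in auto)
  then show ?thesis by (simp add: pmf_expectation_bind[OF assms])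
qed

lemma expectation_traj_Suc:
  assumes \<pi>: "valid_policy K \<pi>" and D: "binary_rewards D"
  shows "measure_pmf.expectation (traj \<pi> D (Suc n)) f =
    measure_pmf.expectation (traj \<pi> D n) (\<lambda>h. \<Sum>a<K. pmf (\<pi> h) a *
        (pmf (D n a) 0 * f (h @ [(a, 0)]) + pmf (D n a) 1 * f (h @ [(a, 1)])))"
proof -
  let ?step = "\<lambda>h a. D n a \<bind> (\<lambda>y. return_pmf (h @ [(a, y)]))"
  have fin_step: "finite (set_pmf (?step h a))" for h a
  proof (rule finite_subset)
    show "set_pmf (?step h a) \<subseteq> (\<lambda>y. h @ [(a, y)]) ` {0, 1}"
      using D unfolding binary_rewards_def by auto
  qed simp
  have step: "measure_pmf.expectation (?step h a) f
      = pmf (D n a) 0 * f (h @ [(a, 0)]) + pmf (D n a) 1 * f (h @ [(a, 1)])" for h a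
    by (subst pmf_expectation_bind[of "{0, 1}"]) (use D in \<open>auto simp: binary_rewards_def\<close>)
  have "set_pmf (\<pi> h \<bind> ?step h) \<subseteq> (\<lambda>(a, y). h @ [(a, y)]) ` ({..<K} \<times> {0, 1})" for h
    using \<pi> D unfolding valid_policy_def binary_rewards_def by fastforce
  then have "finite (set_pmf (\<pi> h \<bind> ?step h))" for h
    by (rule finite_subset) auto
  then have "measure_pmf.expectation (traj \<pi> D (Suc n)) f
      = measure_pmf.expectation (traj \<pi> D n) (\<lambda>h. measure_pmf.expectation (\<pi> h \<bind> ?step h) f)"
    by (simp only: traj.simps expectation_bind_pmf_finite[OF finite_histories _ set_pmf_traj[OF \<pi> D]])
  also have "\<dots> = measure_pmf.expectation (traj \<pi> D n) (\<lambda>h. \<Sum>a<K. pmf (\<pi> h) a *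
        (pmf (D n a) 0 * f (h @ [(a, 0)]) + pmf (D n a) 1 * f (h @ [(a, 1)])))"
    by (subst pmf_expectation_bind[of "{..<K}"]) (use \<pi> fin_step in \<open>simp_all add: step valid_policy_def\<close>)
  finally show ?thesis .
qed

lemma traj_add:
  "traj \<pi> D (m + n) = traj \<pi> D m \<bind>
     (\<lambda>h. map_pmf ((@) h) (traj (\<lambda>h'. \<pi> (h @ h')) (\<lambda>t. D (m + t)) n))"
proof (induction n)
  case 0
  then show ?case by (simp add: bind_return_pmf')
next
  case (Suc n)
  have "traj \<pi> D (m + Suc n) = traj \<pi> D (m + n) \<bind> (\<lambda>h. \<pi> h \<bind> (\<lambda>a.
       D (m + n) a \<bind> (\<lambda>y. return_pmf (h @ [(a, y)]))))"
    by simp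
  then show ?case
    by (simp add: Suc map_pmf_def bind_assoc_pmf bind_return_pmf)
qed

lemma traj_cong:
  assumes "\<And>t a. t < n \<Longrightarrow> D t a = D' t a"
  shows "traj \<pi> D n = traj \<pi> D' n"
  using assms by (induction n) auto

lemma expectation_traj_add:
  fixes f :: "history \<Rightarrow> real"
  assumes \<pi>: "valid_policy K \<pi>" and D: "binary_rewards D"
  shows "measure_pmf.expectation (traj \<pi> D (m + n)) f =
    measure_pmf.expectation (traj \<pi> D m) (\<lambda>h.
       measure_pmf.expectation (traj (\<lambda>h'. \<pi> (h @ h')) (\<lambda>t. D (m + t)) n) (\<lambda>h'. f (h @ h')))"
proof -
  have "finite (set_pmf (traj (\<lambda>h'. \<pi> (h @ h')) (\<lambda>t. D (m + t)) n))" for h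
    using finite_set_pmf_traj[OF valid_policy_append[OF \<pi>] binary_rewards_shift[OF D]] .
  then show ?thesis
    by (subst traj_add, subst expectation_bind_pmf_finite[OF finite_histories _ set_pmf_traj[OF \<pi> D]])
       simp_all
qed

lemma expectation_traj_prefix:
  fixes f :: "history \<Rightarrow> real"
  assumes \<pi>: "valid_policy K \<pi>" and D: "binary_rewards D"
    and "m \<le> T" and f: "\<And>h h'. length h = m \<Longrightarrow> f (h @ h') = f h"
  shows "measure_pmf.expectation (traj \<pi> D T) f = measure_pmf.expectation (traj \<pi> D m) f"
proof -
  have T: "T = m + (T - m)" using \<open>m \<le> T\<close> by simp
  have "measure_pmf.expectation (traj \<pi> D T) f = measure_pmf.expectation (traj \<pi> D m) (\<lambda>h.
       measure_pmf.expectation (traj (\<lambda>h'. \<pi> (h @ h')) (\<lambda>t. D (m + t)) (T - m)) (\<lambda>h'. f (h @ h')))"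
    by (subst T) (rule expectation_traj_add[OF \<pi> D])
  also have "\<dots> = measure_pmf.expectation (traj \<pi> D m) f"
  proof (intro integral_cong_AE)
    show "AE h in measure_pmf (traj \<pi> D m). measure_pmf.expectation
        (traj (\<lambda>h'. \<pi> (h @ h')) (\<lambda>t. D (m + t)) (T - m)) (\<lambda>h'. f (h @ h')) = f h"
      unfolding AE_measure_pmf_iff using length_of_traj[OF \<pi> D] by (simp add: f)
  qed auto
  finally show ?thesis .
qed

lemma hoeffding_expectation_exp_neg:
  fixes P :: "'a pmf" and X :: "'a \<Rightarrow> real"
  assumes fin: "finite (set_pmf P)" and range: "\<And>x. x \<in> set_pmf P \<Longrightarrow> 0 \<le> X x \<and> X x \<le> c"
    and "\<mu> > 0"
  shows "measure_pmf.expectation P (\<lambda>x. exp (- \<mu> * X x))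
       \<le> exp (- \<mu> * measure_pmf.expectation P X + \<mu>\<^sup>2 * c\<^sup>2 / 8)"
proof -
  interpret interval_bounded_random_variable "measure_pmf P" "\<lambda>x. - X x" "-c" 0
    by unfold_locales (use range in \<open>auto simp: AE_measure_pmf_iff\<close>)
  have int: "integrable (measure_pmf P) f" for f :: "'a \<Rightarrow> real"
    by (rule integrable_measure_pmf_finite[OF fin])
  define m where "m = measure_pmf.expectation P X"
  have "ennreal (measure_pmf.expectation P (\<lambda>x. exp (\<mu> * (- X x + m))))
      = (\<integral>\<^sup>+x. ennreal (exp (\<mu> * (- X x - measure_pmf.expectation P (\<lambda>x. - X x)))) \<partial>measure_pmf P)"
    by (subst nn_integral_eq_integral[OF int]) (auto simp: m_def)
  also have "\<dots> \<le> ennreal (exp (\<mu>\<^sup>2 * c\<^sup>2 / 8))"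
    using Hoeffdings_lemma_nn_integral[OF \<open>\<mu> > 0\<close>] by simp
  finally have "measure_pmf.expectation P (\<lambda>x. exp (\<mu> * m) * exp (- \<mu> * X x)) \<le> exp (\<mu>\<^sup>2 * c\<^sup>2 / 8)"
    by (simp add: exp_add[symmetric] algebra_simps)
  then have "measure_pmf.expectation P (\<lambda>x. exp (- \<mu> * X x)) \<le> exp (\<mu>\<^sup>2 * c\<^sup>2 / 8) / exp (\<mu> * m)"
    by (simp add: field_simps mult.commute)
  then show ?thesis
    by (simp add: m_def exp_diff[symmetric])
qed

definition needle_env :: "real \<Rightarrow> nat \<Rightarrow> nat \<Rightarrow> nat \<Rightarrow> real pmf" where
  "needle_env \<epsilon> k t a = bernoulli_reward (1/2 + (if a = k then \<epsilon> else 0))"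

lemma binary_rewards_needle_env: "binary_rewards (needle_env \<epsilon> k)"
  by (simp add: binary_rewards_def needle_env_def set_pmf_bernoulli_reward)

lemma mean_needle_env:
  assumes "0 \<le> \<epsilon>" "\<epsilon> \<le> 1/2"
  shows "mean (needle_env \<epsilon> k t a) = 1/2 + (if a = k then \<epsilon> else 0)"
  unfolding needle_env_def by (rule mean_bernoulli_reward) (use assms in auto)

lemma needle_env_0: "needle_env 0 k = needle_env 0 0"
  by (simp add: needle_env_def fun_eq_iff)

definition lr_factor :: "real \<Rightarrow> nat \<Rightarrow> nat \<times> real \<Rightarrow> real" where
  "lr_factor \<epsilon> k p = (if fst p = k then (if snd p = 1 then 1 + 2*\<epsilon> else 1 - 2*\<epsilon>) else 1)"

definition likelihood_ratio :: "real \<Rightarrow> nat \<Rightarrow> history \<Rightarrow> real" where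
  "likelihood_ratio \<epsilon> k h = prod_list (map (lr_factor \<epsilon> k) h)"

definition pulls :: "nat \<Rightarrow> history \<Rightarrow> real" where
  "pulls k h = sum_list (map (\<lambda>p. if fst p = k then 1 else 0) h)"

lemma likelihood_ratio_snoc:
  "likelihood_ratio \<epsilon> k (h @ [p]) = likelihood_ratio \<epsilon> k h * lr_factor \<epsilon> k p"
  by (simp add: likelihood_ratio_def)

lemma pulls_snoc: "pulls k (h @ [p]) = pulls k h + (if fst p = k then 1 else 0)"
  by (simp add: pulls_def)

lemma likelihood_ratio_pos: "0 \<le> \<epsilon> \<Longrightarrow> \<epsilon> < 1/2 \<Longrightarrow> likelihood_ratio \<epsilon> k h > 0"
  by (induction h rule: rev_induct) (auto simp: likelihood_ratio_snoc lr_factor_def likelihood_ratio_def)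

lemma pulls_bounds: "0 \<le> pulls k h" "pulls k h \<le> length h"
  by (induction h rule: rev_induct) (auto simp: pulls_snoc pulls_def)

lemma sum_pulls: "set h \<subseteq> {..<K} \<times> UNIV \<Longrightarrow> (\<Sum>k<K. pulls k h) = length h"
proof (induction h rule: rev_induct)
  case Nil
  then show ?case by (simp add: pulls_def)
next
  case (snoc p h)
  then have "fst p < K" by (cases p) auto
  with snoc show ?case by (simp add: pulls_snoc sum.distrib)
qed

lemma pulls_conv_sum: "pulls k h = (\<Sum>i<length h. if fst (h ! i) = k then 1 else 0)"
  by (induction h rule: rev_induct) (simp_all add: pulls_snoc pulls_def nth_append)

lemma pmf_needle_env:
  assumes "0 \<le> \<epsilon>" "\<epsilon> \<le> 1/2"
  shows "pmf (needle_env \<epsilon> k t a) 0 = lr_factor \<epsilon> k (a, 0) / 2"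
    and "pmf (needle_env \<epsilon> k t a) 1 = lr_factor \<epsilon> k (a, 1) / 2"
  using assms by (auto simp: needle_env_def lr_factor_def pmf_bernoulli_reward)

lemma expectation_needle_env_change_measure:
  assumes \<pi>: "valid_policy K \<pi>" and \<epsilon>: "0 \<le> \<epsilon>" "\<epsilon> \<le> 1/2"
  shows "measure_pmf.expectation (traj \<pi> (needle_env \<epsilon> k) n) f =
         measure_pmf.expectation (traj \<pi> (needle_env 0 k) n) (\<lambda>h. likelihood_ratio \<epsilon> k h * f h)"
proof (induction n arbitrary: f)
  case 0
  then show ?case by (simp add: likelihood_ratio_def)
next
  case (Suc n)
  let ?Q = "needle_env \<epsilon> k n" and ?P = "needle_env 0 k n" and ?\<Lambda> = "likelihood_ratio \<epsilon> k"
  have "?\<Lambda> h * (\<Sum>a<K. pmf (\<pi> h) a * (pmf (?Q a) 0 * f (h @ [(a, 0)]) + pmf (?Q a) 1 * f (h @ [(a, 1)])))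
      = (\<Sum>a<K. pmf (\<pi> h) a * (pmf (?P a) 0 * (?\<Lambda> (h @ [(a, 0)]) * f (h @ [(a, 0)]))
                               + pmf (?P a) 1 * (?\<Lambda> (h @ [(a, 1)]) * f (h @ [(a, 1)]))))" for h
    unfolding sum_distrib_left
    by (intro sum.cong refl)
       (simp add: pmf_needle_env[OF \<epsilon>] pmf_needle_env[of 0] likelihood_ratio_snoc lr_factor_def algebra_simps)
  then show ?case
    by (simp only: expectation_traj_Suc[OF \<pi> binary_rewards_needle_env] Suc)
qed

text \<open>\<open>kl_rate \<epsilon> = KL(Bernoulli(1/2) \<parallel> Bernoulli(1/2 + \<epsilon>))\<close>.\<close>

definition kl_rate :: "real \<Rightarrow> real" where
  "kl_rate \<epsilon> = - (ln (1 + 2*\<epsilon>) + ln (1 - 2*\<epsilon>)) / 2"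

lemma expectation_ln_likelihood_ratio:
  assumes \<pi>: "valid_policy K \<pi>" and "0 \<le> \<epsilon>" "\<epsilon> < 1/2"
  shows "measure_pmf.expectation (traj \<pi> (needle_env 0 k) n)
           (\<lambda>h. ln (likelihood_ratio \<epsilon> k h) + kl_rate \<epsilon> * pulls k h) = 0"
proof (induction n)
  case 0
  then show ?case by (simp add: likelihood_ratio_def pulls_def)
next
  case (Suc n)
  let ?F = "\<lambda>h. ln (likelihood_ratio \<epsilon> k h) + kl_rate \<epsilon> * pulls k h"
  have step: "pmf (needle_env 0 k n a) 0 * ?F (h @ [(a, 0)]) + pmf (needle_env 0 k n a) 1 * ?F (h @ [(a, 1)])
      = ?F h" for h a
  proof -
    have "ln (likelihood_ratio \<epsilon> k (h @ [(a, y)])) = ln (likelihood_ratio \<epsilon> k h) + ln (lr_factor \<epsilon> k (a, y))"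
      for y
      using assms likelihood_ratio_pos[of \<epsilon> k h]
      by (simp add: likelihood_ratio_snoc ln_mult lr_factor_def)
    then show ?thesis
      by (cases "a = k") (simp_all add: pmf_needle_env pulls_snoc kl_rate_def lr_factor_def field_simps)
  qed
  have "(\<Sum>a<K. pmf (\<pi> h) a * ?F h) = ?F h" for h
    using sum_pmf_eq_1[of "{..<K}" "\<pi> h"] \<pi> by (simp add: sum_distrib_right[symmetric] valid_policy_def)
  then show ?case
    by (simp only: expectation_traj_Suc[OF \<pi> binary_rewards_needle_env] step Suc)
qed

text \<open>The Gibbs variational inequality
  \<open>E\<^sub>Q[e\<^sup>g] \<ge> exp (E\<^sub>P[g] - KL(P\<parallel>Q))\<close>, for \<open>P\<close> the law of the history when all arms are
  equal and \<open>Q\<close> its law when arm \<open>k\<close> is better; \<open>KL(P\<parallel>Q)\<close> is \<open>kl_rate \<epsilon>\<close> times the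
  expected number of pulls of \<open>k\<close>.\<close>

lemma expectation_exp_needle_env_ge:
  assumes \<pi>: "valid_policy K \<pi>" and \<epsilon>: "0 \<le> \<epsilon>" "\<epsilon> < 1/2"
  shows "exp (measure_pmf.expectation (traj \<pi> (needle_env 0 k) n) g
              - kl_rate \<epsilon> * measure_pmf.expectation (traj \<pi> (needle_env 0 k) n) (pulls k))
       \<le> measure_pmf.expectation (traj \<pi> (needle_env \<epsilon> k) n) (\<lambda>h. exp (g h))"
proof -
  let ?P = "traj \<pi> (needle_env 0 k) n"
  let ?G = "\<lambda>h. g h + ln (likelihood_ratio \<epsilon> k h)"
  have int: "integrable (measure_pmf ?P) f" for f :: "history \<Rightarrow> real"
    by (rule integrable_traj[OF \<pi> binary_rewards_needle_env])
  define m where "m = measure_pmf.expectation ?P ?G"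
  have "m = measure_pmf.expectation ?P g + measure_pmf.expectation ?P (\<lambda>h. ln (likelihood_ratio \<epsilon> k h))"
    unfolding m_def using int by simp
  also have "measure_pmf.expectation ?P (\<lambda>h. ln (likelihood_ratio \<epsilon> k h))
      = - kl_rate \<epsilon> * measure_pmf.expectation ?P (pulls k)"
    using expectation_ln_likelihood_ratio[OF \<pi> \<epsilon>, of k n] int by simp
  finally have m: "m = measure_pmf.expectation ?P g - kl_rate \<epsilon> * measure_pmf.expectation ?P (pulls k)"
    by simp
  have "exp m = measure_pmf.expectation ?P (\<lambda>h. exp m * (1 + ?G h - m))"
    using int by (simp add: m_def algebra_simps)
  also have "\<dots> \<le> measure_pmf.expectation ?P (\<lambda>h. exp (?G h))"
  proof (rule integral_mono[OF int int])
    fix h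
    have "exp m * (1 + (?G h - m)) \<le> exp m * exp (?G h - m)"
      by (intro mult_left_mono) auto
    then show "exp m * (1 + ?G h - m) \<le> exp (?G h)"
      by (simp add: exp_diff algebra_simps)
  qed
  also have "\<dots> = measure_pmf.expectation ?P (\<lambda>h. likelihood_ratio \<epsilon> k h * exp (g h))"
  proof (rule Bochner_Integration.integral_cong[OF refl])
    fix h
    have "exp (?G h) = exp (g h) * likelihood_ratio \<epsilon> k h"
      using likelihood_ratio_pos[OF \<epsilon>] by (simp add: exp_add)
    then show "exp (?G h) = likelihood_ratio \<epsilon> k h * exp (g h)"
      by simp
  qed
  also have "\<dots> = measure_pmf.expectation (traj \<pi> (needle_env \<epsilon> k) n) (\<lambda>h. exp (g h))"
    using expectation_needle_env_change_measure[OF \<pi>, of \<epsilon> k n] \<epsilon> by simp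
  finally show ?thesis
    using m by simp
qed

lemma sum_expected_pulls:
  assumes \<pi>: "valid_policy K \<pi>" and D: "binary_rewards D"
  shows "(\<Sum>k<K. measure_pmf.expectation (traj \<pi> D n) (pulls k)) = n"
proof -
  have "(\<Sum>k<K. measure_pmf.expectation (traj \<pi> D n) (pulls k))
      = measure_pmf.expectation (traj \<pi> D n) (\<lambda>h. \<Sum>k<K. pulls k h)"
    by (rule Bochner_Integration.integral_sum[symmetric]) (rule integrable_traj[OF \<pi> D])
  also have "\<dots> = measure_pmf.expectation (traj \<pi> D n) (\<lambda>h. real n)"
  proof (intro integral_cong_AE)
    have "(\<Sum>k<K. pulls k h) = real n" if "h \<in> histories K n" for h
      using that by (subst sum_pulls) (auto simp: histories_def)
    then show "AE h in measure_pmf (traj \<pi> D n). (\<Sum>k<K. pulls k h) = real n"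
      using set_pmf_traj[OF \<pi> D] by (auto simp: AE_measure_pmf_iff)
  qed auto
  finally show ?thesis by simp
qed

lemma expected_pulls_needle_env_le:
  assumes \<pi>: "valid_policy K \<pi>" and \<epsilon>: "0 \<le> \<epsilon>" "\<epsilon> < 1/2" and "\<mu> > 0"
  shows "\<mu> * measure_pmf.expectation (traj \<pi> (needle_env \<epsilon> k) n) (pulls k)
       \<le> (\<mu> + kl_rate \<epsilon>) * measure_pmf.expectation (traj \<pi> (needle_env 0 0) n) (pulls k)
         + \<mu>\<^sup>2 * (real n)\<^sup>2 / 8"
proof -
  define m0 where "m0 = measure_pmf.expectation (traj \<pi> (needle_env 0 0) n) (pulls k)"
  define m where "m = measure_pmf.expectation (traj \<pi> (needle_env \<epsilon> k) n) (pulls k)"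
  have "exp (- \<mu> * m0 - kl_rate \<epsilon> * m0)
      \<le> measure_pmf.expectation (traj \<pi> (needle_env \<epsilon> k) n) (\<lambda>h. exp (- \<mu> * pulls k h))"
    using expectation_exp_needle_env_ge[OF \<pi> \<epsilon>, of k n "\<lambda>h. - \<mu> * pulls k h"]
    by (simp add: m0_def needle_env_0[of k])
  also have "\<dots> \<le> exp (- \<mu> * m + \<mu>\<^sup>2 * (real n)\<^sup>2 / 8)"
    unfolding m_def
  proof (rule hoeffding_expectation_exp_neg[OF finite_set_pmf_traj[OF \<pi> binary_rewards_needle_env]
        _ \<open>\<mu> > 0\<close>])
    fix h assume "h \<in> set_pmf (traj \<pi> (needle_env \<epsilon> k) n)"
    then show "0 \<le> pulls k h \<and> pulls k h \<le> real n"
      using pulls_bounds[of k h] length_of_traj[OF \<pi> binary_rewards_needle_env] by simp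
  qed
  finally show ?thesis
    by (simp add: m0_def m_def algebra_simps)
qed

lemma minus_ln_one_minus_le:
  fixes x :: real
  assumes "0 \<le> x" "x \<le> 1/4"
  shows "- ln (1 - x) \<le> 4 * ln (4/3) * x"
proof -
  have "(1 - 4*x) * ln 1 + (4*x) * ln (3/4::real) \<le> ln ((1 - 4*x) *\<^sub>R 1 + (4*x) *\<^sub>R (3/4))"
    by (rule concave_onD[OF ln_concave]) (use assms in auto)
  moreover have "ln (3/4::real) = - ln (4/3)"
    by (simp add: ln_div)
  ultimately show ?thesis
    by (simp add: mult_ac)
qed

lemma kl_rate_le:
  assumes "0 \<le> \<epsilon>" "\<epsilon> \<le> 1/4"
  shows "kl_rate \<epsilon> \<le> 8 * ln (4/3) * \<epsilon>\<^sup>2"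
proof -
  have "(1 + 2*\<epsilon>) * (1 - 2*\<epsilon>) = 1 - 4 * \<epsilon>\<^sup>2"
    by (simp add: algebra_simps power2_eq_square)
  then have "ln (1 + 2*\<epsilon>) + ln (1 - 2*\<epsilon>) = ln (1 - 4 * \<epsilon>\<^sup>2)"
    using assms ln_mult[of "1 + 2*\<epsilon>" "1 - 2*\<epsilon>"] by simp
  moreover have "- ln (1 - 4 * \<epsilon>\<^sup>2) \<le> 4 * ln (4/3) * (4 * \<epsilon>\<^sup>2)"
    using assms mult_mono[of "4 * \<epsilon>" 1 "4 * \<epsilon>" 1]
    by (intro minus_ln_one_minus_le) (auto simp: power2_eq_square)
  ultimately show ?thesis
    by (simp add: kl_rate_def)
qed

text \<open>Here the transfer bound is applied with \<open>\<mu> = 2 \<surd>(ln (4/3)) / n\<close>, which balances the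
  information cost \<open>kl_rate \<epsilon>\<close> against the Hoeffding term.\<close>

lemma sum_expected_pulls_needle_env_le:
  assumes \<pi>: "valid_policy K \<pi>" and \<epsilon>: "0 \<le> \<epsilon>" "\<epsilon> \<le> 1/4"
    and "16 * \<epsilon>\<^sup>2 * n \<le> K" and "n > 0"
  shows "(\<Sum>k<K. measure_pmf.expectation (traj \<pi> (needle_env \<epsilon> k) n) (pulls k))
       \<le> n + sqrt (ln (4/3)) * K * n / 2"
proof -
  define s where "s = sqrt (ln (4/3::real))"
  define \<mu> where "\<mu> = 2 * s / n"
  let ?m0 = "\<lambda>k. measure_pmf.expectation (traj \<pi> (needle_env 0 0) n) (pulls k)"
  have "s > 0" "s\<^sup>2 = ln (4/3)"
    by (simp_all add: s_def)
  then have "\<mu> > 0"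
    using \<open>n > 0\<close> by (simp add: \<mu>_def)
  have "kl_rate \<epsilon> \<le> 8 * s\<^sup>2 * \<epsilon>\<^sup>2"
    using kl_rate_le[OF \<epsilon>] \<open>s\<^sup>2 = ln (4/3)\<close> by simp
  also have "\<dots> \<le> 8 * s\<^sup>2 * (K / (16 * n))"
    using \<open>16 * \<epsilon>\<^sup>2 * n \<le> K\<close> \<open>n > 0\<close> by (intro mult_left_mono) (auto simp: field_simps)
  also have "\<dots> = \<mu> * (s * K / 4)"
    using \<open>n > 0\<close> by (simp add: \<mu>_def power2_eq_square field_simps)
  finally have kl: "kl_rate \<epsilon> \<le> \<mu> * (s * K / 4)" .
  have "measure_pmf.expectation (traj \<pi> (needle_env \<epsilon> k) n) (pulls k)
      \<le> ?m0 k * (1 + s * K / 4) + s * n / 4" for k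
  proof -
    have "0 \<le> ?m0 k"
      by (intro Bochner_Integration.integral_nonneg) (simp add: pulls_bounds)
    then have "kl_rate \<epsilon> * ?m0 k \<le> \<mu> * (s * K / 4) * ?m0 k"
      by (rule mult_right_mono[OF kl])
    moreover have "\<mu>\<^sup>2 * (real n)\<^sup>2 / 8 = \<mu> * (s * n / 4)"
      using \<open>n > 0\<close> by (simp add: \<mu>_def power2_eq_square field_simps)
    ultimately have "\<mu> * measure_pmf.expectation (traj \<pi> (needle_env \<epsilon> k) n) (pulls k)
        \<le> \<mu> * (?m0 k * (1 + s * K / 4) + s * n / 4)"
      using expected_pulls_needle_env_le[OF \<pi> \<epsilon>(1) _ \<open>\<mu> > 0\<close>, of k n] \<epsilon>(2)
      by (simp add: algebra_simps)
    then show ?thesis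
      using \<open>\<mu> > 0\<close> by simp
  qed
  then have "(\<Sum>k<K. measure_pmf.expectation (traj \<pi> (needle_env \<epsilon> k) n) (pulls k))
      \<le> (\<Sum>k<K. ?m0 k * (1 + s * K / 4) + s * n / 4)"
    by (rule sum_mono)
  also have "\<dots> = (\<Sum>k<K. ?m0 k) * (1 + s * K / 4) + K * (s * n / 4)"
    by (simp add: sum.distrib sum_distrib_right)
  also have "\<dots> = n + s * K * n / 2"
    using sum_expected_pulls[OF \<pi> binary_rewards_needle_env, of 0 0 n] by (simp add: algebra_simps)
  finally show ?thesis
    by (simp add: s_def)
qed

definition pulls_between :: "nat \<Rightarrow> nat \<Rightarrow> nat \<Rightarrow> history \<Rightarrow> real" where
  "pulls_between i j k h = (\<Sum>t\<in>{i..<j}. if fst (h ! t) = k then 1 else 0)"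

lemma pulls_between_append:
  assumes "length h = i"
  shows "pulls_between i (i + length h') k (h @ h') = pulls k h'"
proof -
  have "pulls_between i (i + length h') k (h @ h') = (\<Sum>t<length h'. if fst ((h @ h') ! (i + t)) = k then 1 else 0)"
    unfolding pulls_between_def
    by (subst sum.atLeastLessThan_shift_0) (simp add: lessThan_atLeast0 add.commute)
  also have "\<dots> = pulls k h'"
    using assms by (simp add: pulls_conv_sum nth_append)
  finally show ?thesis .
qed

definition block_env :: "real \<Rightarrow> nat \<Rightarrow> (nat \<Rightarrow> nat) \<Rightarrow> nat \<Rightarrow> nat \<Rightarrow> real pmf" where
  "block_env \<epsilon> L g t = needle_env \<epsilon> (g (t div L)) t"

lemma binary_rewards_block_env: "binary_rewards (block_env \<epsilon> L g)"
  using binary_rewards_needle_env by (simp add: binary_rewards_def block_env_def)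

lemma expected_pulls_between_block_env:
  assumes \<pi>: "valid_policy K \<pi>" and "0 < L" "n \<le> L"
  shows "measure_pmf.expectation (traj \<pi> (block_env \<epsilon> L (g(b := k))) (b * L + n))
           (pulls_between (b * L) (b * L + n) k)
       = measure_pmf.expectation (traj \<pi> (block_env \<epsilon> L g) (b * L))
           (\<lambda>h. measure_pmf.expectation (traj (\<lambda>h'. \<pi> (h @ h')) (needle_env \<epsilon> k) n) (pulls k))"
proof -
  let ?D = "block_env \<epsilon> L (g(b := k))"
  have prefix: "traj \<pi> ?D (b * L) = traj \<pi> (block_env \<epsilon> L g) (b * L)"
  proof (rule traj_cong)
    fix t a assume "t < b * L"
    then have "t div L < b"
      using \<open>0 < L\<close> by (simp add: div_less_iff_less_mult)
    then show "?D t a = block_env \<epsilon> L g t a"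
      by (simp add: block_env_def)
  qed
  have block: "traj \<pi>' (\<lambda>t. ?D (b * L + t)) n = traj \<pi>' (needle_env \<epsilon> k) n" for \<pi>'
  proof (rule traj_cong)
    fix t a assume "t < n"
    then have "(b * L + t) div L = b"
      using \<open>0 < L\<close> \<open>n \<le> L\<close> by (simp add: div_add1_eq[of "b * L" t L])
    then show "?D (b * L + t) a = needle_env \<epsilon> k t a"
      by (simp add: block_env_def needle_env_def)
  qed
  have inner: "measure_pmf.expectation (traj (\<lambda>h'. \<pi> (h @ h')) (needle_env \<epsilon> k) n)
        (\<lambda>h'. pulls_between (b * L) (b * L + n) k (h @ h'))
      = measure_pmf.expectation (traj (\<lambda>h'. \<pi> (h @ h')) (needle_env \<epsilon> k) n) (pulls k)"
    if "length h = b * L" for h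
  proof (intro integral_cong_AE)
    show "AE h' in measure_pmf (traj (\<lambda>h'. \<pi> (h @ h')) (needle_env \<epsilon> k) n).
        pulls_between (b * L) (b * L + n) k (h @ h') = pulls k h'"
      using length_of_traj[OF valid_policy_append[OF \<pi>] binary_rewards_needle_env]
        pulls_between_append[OF that] by (fastforce simp: AE_measure_pmf_iff)
  qed auto
  show ?thesis
    unfolding expectation_traj_add[OF \<pi> binary_rewards_block_env] prefix block
    by (intro integral_cong_AE)
       (auto simp: AE_measure_pmf_iff inner length_of_traj[OF \<pi> binary_rewards_block_env])
qed

definition block_start :: "nat \<Rightarrow> nat \<Rightarrow> nat \<Rightarrow> nat" where
  "block_start T L b = min T (b * L)"

lemma block_start_mono: "block_start T L b \<le> block_start T L (Suc b)"
  by (simp add: block_start_def min.mono)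

lemma exists_le_average:
  fixes f :: "'a \<Rightarrow> real" and c :: real
  assumes "finite A" "A \<noteq> {}" "(\<Sum>x\<in>A. f x) \<le> card A * c"
  shows "\<exists>x\<in>A. f x \<le> c"
proof (rule ccontr)
  assume "\<not> (\<exists>x\<in>A. f x \<le> c)"
  then have "(\<Sum>x\<in>A. c) < (\<Sum>x\<in>A. f x)"
    using assms by (intro sum_strict_mono) auto
  with assms show False
    by simp
qed

lemma exists_arm_few_pulls_in_block:
  assumes \<pi>: "valid_policy K \<pi>" and "K \<ge> 2" and "0 < n" "n \<le> L"
    and \<epsilon>: "0 \<le> \<epsilon>" "\<epsilon> \<le> 1/4" "16 * \<epsilon>\<^sup>2 * L \<le> K"
  shows "\<exists>k<K. measure_pmf.expectation (traj \<pi> (block_env \<epsilon> L (g(b := k))) (b * L + n))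
                 (pulls_between (b * L) (b * L + n) k)
               \<le> (1 + sqrt (ln (4/3))) / 2 * n"
proof -
  define s where "s = sqrt (ln (4/3::real))"
  have "0 \<le> s"
    by (simp add: s_def)
  have "16 * \<epsilon>\<^sup>2 * n \<le> K"
    using \<open>n \<le> L\<close> order_trans[OF mult_left_mono[of n L "16 * \<epsilon>\<^sup>2"] \<epsilon>(3)] by simp
  let ?P = "traj \<pi> (block_env \<epsilon> L g) (b * L)"
  let ?pulls = "\<lambda>k. measure_pmf.expectation (traj \<pi> (block_env \<epsilon> L (g(b := k))) (b * L + n))
                 (pulls_between (b * L) (b * L + n) k)"
  have "(\<Sum>k<K. ?pulls k) = measure_pmf.expectation ?P (\<lambda>h. \<Sum>k<K.
      measure_pmf.expectation (traj (\<lambda>h'. \<pi> (h @ h')) (needle_env \<epsilon> k) n) (pulls k))"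
    using \<open>0 < n\<close> \<open>n \<le> L\<close> expected_pulls_between_block_env[OF \<pi> _ \<open>n \<le> L\<close>]
    by (simp add: Bochner_Integration.integral_sum integrable_traj[OF \<pi> binary_rewards_block_env])
  also have "\<dots> \<le> measure_pmf.expectation ?P (\<lambda>h. n + s * K * n / 2)"
    using sum_expected_pulls_needle_env_le[OF valid_policy_append[OF \<pi>] \<epsilon>(1,2)
        \<open>16 * \<epsilon>\<^sup>2 * n \<le> K\<close> \<open>0 < n\<close>]
    by (intro integral_mono integrable_traj[OF \<pi> binary_rewards_block_env]) (simp_all add: s_def)
  also have "\<dots> \<le> card {..<K} * ((1 + s) / 2 * n)"
    using \<open>K \<ge> 2\<close> \<open>0 \<le> s\<close> mult_right_mono[of 2 "real K" "real n"] by (simp add: algebra_simps)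
  finally have "\<exists>k\<in>{..<K}. ?pulls k \<le> (1 + s) / 2 * n"
    using \<open>K \<ge> 2\<close> by (intro exists_le_average) (auto simp: lessThan_empty_iff)
  then show ?thesis
    by (auto simp: s_def)
qed

lemma exists_arm_few_pulls_in_block_start:
  assumes \<pi>: "valid_policy K \<pi>" and "K \<ge> 2" and "0 < L"
    and \<epsilon>: "0 \<le> \<epsilon>" "\<epsilon> \<le> 1/4" "16 * \<epsilon>\<^sup>2 * L \<le> K"
  shows "\<exists>k<K. measure_pmf.expectation (traj \<pi> (block_env \<epsilon> L (g(b := k))) (block_start T L (Suc b)))
                 (pulls_between (block_start T L b) (block_start T L (Suc b)) k)
               \<le> (1 + sqrt (ln (4/3))) / 2 * (real (block_start T L (Suc b)) - real (block_start T L b))"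
proof (cases "block_start T L b = block_start T L (Suc b)")
  case True
  then show ?thesis
    using \<open>K \<ge> 2\<close> by (intro exI[of _ 0]) (auto simp: pulls_between_def[abs_def])
next
  case False
  define n where "n = block_start T L (Suc b) - block_start T L b"
  have "block_start T L b = b * L" "block_start T L (Suc b) = b * L + n" "0 < n" "n \<le> L"
    using False block_start_mono[of T L b] by (auto simp: n_def block_start_def)
  then show ?thesis
    using exists_arm_few_pulls_in_block[OF \<pi> \<open>K \<ge> 2\<close> \<open>0 < n\<close> \<open>n \<le> L\<close> \<epsilon>, of g b] by simp
qed

lemma sequential_choice:
  fixes P :: "nat \<Rightarrow> (nat \<Rightarrow> 'a) \<Rightarrow> bool"
  assumes local: "\<And>b g g'. (\<And>c. c \<le> b \<Longrightarrow> g c = g' c) \<Longrightarrow> P b g \<Longrightarrow> P b g'"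
    and step: "\<And>b g. \<exists>k\<in>A. P b (g(b := k))" and "a \<in> A"
  shows "\<exists>g. (\<forall>b. g b \<in> A) \<and> (\<forall>b. P b g)"
proof -
  define choice where "choice g b = (SOME k. k \<in> A \<and> P b (g(b := k)))" for g b
  have choice: "choice g b \<in> A \<and> P b (g(b := choice g b))" for g b
    unfolding choice_def using someI_ex[OF step[unfolded Bex_def]] by blast
  define G where "G = rec_nat (\<lambda>_. a) (\<lambda>b g. g(b := choice g b))"
  have G_0: "G 0 = (\<lambda>_. a)" and G_Suc: "G (Suc b) = (G b)(b := choice (G b) b)" for b
    by (simp_all add: G_def)
  have G_in_A: "G b c \<in> A" for b c
    by (induction b) (use \<open>a \<in> A\<close> choice in \<open>simp_all add: G_0 G_Suc\<close>)
  have G_stable: "G b c = G (Suc c) c" if "c < b" for b c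
    using that by (induction b) (auto simp: G_Suc less_Suc_eq)
  define g where "g c = G (Suc c) c" for c
  have "P b g" for b
  proof (rule local)
    show "P b (G (Suc b))"
      using choice[of "G b" b] by (simp add: G_Suc)
    show "G (Suc b) c = g c" if "c \<le> b" for c
      using G_stable[of c "Suc b"] that by (simp add: g_def)
  qed
  moreover have "\<forall>b. g b \<in> A"
    by (simp add: g_def G_in_A)
  ultimately show ?thesis
    by blast
qed

lemma block_start_0: "block_start T L 0 = 0"
  by (simp add: block_start_def)

lemma block_start_self: "0 < L \<Longrightarrow> block_start T L T = T"
  by (simp add: block_start_def)

lemma div_eq_if_in_block:
  "0 < L \<Longrightarrow> i \<in> {block_start T L b..<block_start T L (Suc b)} \<Longrightarrow> i div L = b"
  by (auto simp: block_start_def min_def split: if_splits intro!: div_nat_eqI) (auto simp: mult.commute)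

lemma sum_blocks:
  fixes F :: "nat \<Rightarrow> real"
  shows "(\<Sum>i<block_start T L B. F i) = (\<Sum>b<B. \<Sum>i\<in>{block_start T L b..<block_start T L (Suc b)}. F i)"
proof (induction B)
  case 0
  then show ?case by (simp add: block_start_0)
next
  case (Suc B)
  have "(\<Sum>i<block_start T L (Suc B). F i)
      = (\<Sum>i<block_start T L B. F i) + (\<Sum>i\<in>{block_start T L B..<block_start T L (Suc B)}. F i)"
    using block_start_mono[of T L B] by (simp add: lessThan_atLeast0 sum.atLeastLessThan_concat)
  then show ?case
    using Suc by simp
qed

definition best_arm_pulls :: "nat \<Rightarrow> (nat \<Rightarrow> nat) \<Rightarrow> nat \<Rightarrow> history \<Rightarrow> real" where
  "best_arm_pulls L g T h = (\<Sum>i<T. if fst (h ! i) = g (i div L) then 1 else 0)"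

lemma best_arm_pulls_eq_sum_blocks:
  assumes "0 < L"
  shows "best_arm_pulls L g T h
       = (\<Sum>b<T. pulls_between (block_start T L b) (block_start T L (Suc b)) (g b) h)"
proof -
  have "best_arm_pulls L g T h = (\<Sum>i<block_start T L T. if fst (h ! i) = g (i div L) then 1 else 0)"
    using assms by (simp add: best_arm_pulls_def block_start_self)
  also have "\<dots> = (\<Sum>b<T. pulls_between (block_start T L b) (block_start T L (Suc b)) (g b) h)"
    unfolding sum_blocks pulls_between_def
    by (intro sum.cong refl) (simp add: div_eq_if_in_block[OF assms])
  finally show ?thesis .
qed

lemma expected_best_arm_pulls_eq_sum_blocks:
  assumes \<pi>: "valid_policy K \<pi>" and "0 < L"
  shows "measure_pmf.expectation (traj \<pi> (block_env \<epsilon> L g) T) (best_arm_pulls L g T)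
       = (\<Sum>b<T. measure_pmf.expectation (traj \<pi> (block_env \<epsilon> L g) (block_start T L (Suc b)))
             (pulls_between (block_start T L b) (block_start T L (Suc b)) (g b)))"
proof -
  let ?e = "block_start T L"
  have "measure_pmf.expectation (traj \<pi> (block_env \<epsilon> L g) T) (best_arm_pulls L g T)
      = (\<Sum>b<T. measure_pmf.expectation (traj \<pi> (block_env \<epsilon> L g) T) (pulls_between (?e b) (?e (Suc b)) (g b)))"
    unfolding best_arm_pulls_eq_sum_blocks[OF \<open>0 < L\<close>, abs_def]
    by (rule Bochner_Integration.integral_sum) (rule integrable_traj[OF \<pi> binary_rewards_block_env])
  also have "\<dots> = (\<Sum>b<T. measure_pmf.expectation (traj \<pi> (block_env \<epsilon> L g) (?e (Suc b)))
      (pulls_between (?e b) (?e (Suc b)) (g b)))"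
  proof (intro sum.cong refl expectation_traj_prefix[OF \<pi> binary_rewards_block_env])
    show "?e (Suc b) \<le> T" for b
      by (simp add: block_start_def)
    show "pulls_between (?e b) (?e (Suc b)) (g b) (h @ h') = pulls_between (?e b) (?e (Suc b)) (g b) h"
      if "length h = ?e (Suc b)" for b h h'
      using that by (auto simp: pulls_between_def nth_append intro!: sum.cong)
  qed
  finally show ?thesis .
qed

lemma traj_block_env_cong:
  assumes "0 < L" and "\<And>j. j \<le> b \<Longrightarrow> g j = g' j"
  shows "traj \<pi> (block_env \<epsilon> L g) (block_start T L (Suc b)) = traj \<pi> (block_env \<epsilon> L g') (block_start T L (Suc b))"
proof (rule traj_cong)
  fix t a assume "t < block_start T L (Suc b)"
  then have "t div L \<le> b"
    using \<open>0 < L\<close> by (simp add: block_start_def less_Suc_eq_le[symmetric] div_less_iff_less_mult)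
  then show "block_env \<epsilon> L g t a = block_env \<epsilon> L g' t a"
    by (simp add: block_env_def assms(2))
qed

text \<open>The adversary fixes the best arm of each block in turn: the choice for block \<open>b\<close>
  is good against the policy's behaviour given the choices for the earlier blocks, and
  later choices do not affect what happens up to the end of block \<open>b\<close>.\<close>

lemma exists_block_env_few_best_arm_pulls:
  assumes \<pi>: "valid_policy K \<pi>" and "K \<ge> 2" and "0 < L"
    and \<epsilon>: "0 \<le> \<epsilon>" "\<epsilon> \<le> 1/4" "16 * \<epsilon>\<^sup>2 * L \<le> K"
  shows "\<exists>g. (\<forall>b. g b < K) \<and> measure_pmf.expectation (traj \<pi> (block_env \<epsilon> L g) T)
            (best_arm_pulls L g T) \<le> (1 + sqrt (ln (4/3))) / 2 * T"
proof -
  define e where "e = block_start T L"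
  define c where "c = (1 + sqrt (ln (4/3::real))) / 2"
  define P where "P b g \<longleftrightarrow> measure_pmf.expectation (traj \<pi> (block_env \<epsilon> L g) (e (Suc b)))
      (pulls_between (e b) (e (Suc b)) (g b)) \<le> c * (real (e (Suc b)) - real (e b))"
    for b and g :: "nat \<Rightarrow> nat"
  have "\<exists>g. (\<forall>b. g b \<in> {..<K}) \<and> (\<forall>b. P b g)"
  proof (rule sequential_choice[where a=0])
    fix b :: nat and g g' :: "nat \<Rightarrow> nat"
    assume "\<And>j. j \<le> b \<Longrightarrow> g j = g' j"
    then show "P b g \<Longrightarrow> P b g'"
      using traj_block_env_cong[OF \<open>0 < L\<close>, of b g g'] by (simp add: P_def e_def)
  next
    show "\<exists>k\<in>{..<K}. P b (g(b := k))" for b g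
      using exists_arm_few_pulls_in_block_start[OF \<pi> \<open>K \<ge> 2\<close> \<open>0 < L\<close> \<epsilon>, of g b T]
      by (simp add: P_def e_def c_def Bex_def)
  qed (use \<open>K \<ge> 2\<close> in simp)
  then obtain g :: "nat \<Rightarrow> nat" where "\<forall>b. g b < K" and P: "\<And>b. P b g"
    by auto
  have "measure_pmf.expectation (traj \<pi> (block_env \<epsilon> L g) T) (best_arm_pulls L g T)
      \<le> (\<Sum>b<T. c * (real (e (Suc b)) - real (e b)))"
    unfolding expected_best_arm_pulls_eq_sum_blocks[OF \<pi> \<open>0 < L\<close>]
    using P by (intro sum_mono) (simp add: P_def e_def)
  also have "\<dots> = c * T"
    using sum_lessThan_telescope[of "\<lambda>b. real (e b)" T]
    by (simp add: sum_distrib_left[symmetric] e_def block_start_0 block_start_self[OF \<open>0 < L\<close>])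
  finally show ?thesis
    using \<open>\<forall>b. g b < K\<close> by (auto simp: c_def)
qed

lemma mean_block_env:
  assumes "0 \<le> \<epsilon>" "\<epsilon> \<le> 1/2"
  shows "mean (block_env \<epsilon> L g t a) = 1/2 + (if a = g (t div L) then \<epsilon> else 0)"
  by (simp add: block_env_def mean_needle_env[OF assms])

lemma variation_block_env_le:
  assumes \<epsilon>: "0 \<le> \<epsilon>" "\<epsilon> \<le> 1/2" and "0 < L" "0 < K"
  shows "variation K T (block_env \<epsilon> L g) \<le> \<epsilon> * T / L"
proof -
  have step: "Max ((\<lambda>k. \<bar>mean (block_env \<epsilon> L g t k) - mean (block_env \<epsilon> L g (Suc t) k)\<bar>) ` {..<K})
      \<le> \<epsilon> * (real (Suc t div L) - real (t div L))" for t
  proof (cases "t div L = Suc t div L")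
    case True
    then show ?thesis
      using \<open>0 < K\<close> by (simp add: mean_block_env[OF \<epsilon>] Max_le_iff lessThan_empty_iff)
  next
    case False
    then have "1 \<le> real (Suc t div L) - real (t div L)"
      using div_le_mono[of t "Suc t" L] by linarith
    then have "\<epsilon> \<le> \<epsilon> * (real (Suc t div L) - real (t div L))"
      using mult_left_mono[of 1 _ \<epsilon>] \<epsilon> by simp
    moreover have "\<bar>mean (block_env \<epsilon> L g t k) - mean (block_env \<epsilon> L g (Suc t) k)\<bar> \<le> \<epsilon>" for k
      using \<epsilon> by (simp add: mean_block_env[OF \<epsilon>])
    ultimately show ?thesis
      using \<open>0 < K\<close> by (auto simp: Max_le_iff lessThan_empty_iff intro: order_trans)
  qed
  have "variation K T (block_env \<epsilon> L g) \<le> (\<Sum>t<T - 1. \<epsilon> * (real (Suc t div L) - real (t div L)))"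
    unfolding variation_def by (intro sum_mono step)
  also have "\<dots> = \<epsilon> * real ((T - 1) div L)"
    using sum_lessThan_telescope[of "\<lambda>t. real (t div L)" "T - 1"] by (simp add: sum_distrib_left[symmetric])
  also have "\<dots> \<le> \<epsilon> * (T / L)"
  proof (intro mult_left_mono \<epsilon>(1))
    have "(T - 1) div L * L \<le> T"
      by (meson diff_le_self div_times_less_eq_dividend le_trans)
    then show "real ((T - 1) div L) \<le> T / L"
      using \<open>0 < L\<close> by (simp add: field_simps flip: of_nat_mult)
  qed
  finally show ?thesis
    by simp
qed

lemma window_regret_le_horizon:
  assumes "admissible K T V D" "0 < K"
  shows "window_regret K T W \<pi> D \<le> T"
proof -
  have mean: "0 \<le> mean (D t k)" "mean (D t k) \<le> 1" for t k
    using assms(1) mean_bounds unfolding admissible_def by blast+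
  have "Max ((\<lambda>k. \<Sum>t\<in>{j*W..<(j+1)*W}. mean (D t k)) ` {..<K}) \<le> W" for j
  proof -
    have "(\<Sum>t\<in>{j*W..<(j+1)*W}. mean (D t k)) \<le> (\<Sum>t\<in>{j*W..<(j+1)*W}. 1)" for k
      by (intro sum_mono mean)
    then show ?thesis
      using \<open>0 < K\<close> by (simp add: Max_le_iff lessThan_empty_iff)
  qed
  then have "(\<Sum>j<T div W. Max ((\<lambda>k. \<Sum>t\<in>{j*W..<(j+1)*W}. mean (D t k)) ` {..<K}))
      \<le> real (T div W) * W"
    using sum_mono[of "{..<T div W}" _ "\<lambda>_. real W"] by simp
  also have "\<dots> \<le> T"
    by (simp flip: of_nat_mult)
  finally have "(\<Sum>j<T div W. Max ((\<lambda>k. \<Sum>t\<in>{j*W..<(j+1)*W}. mean (D t k)) ` {..<K})) \<le> T" .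
  moreover have "0 \<le> exp_collected \<pi> D T"
    unfolding exp_collected_def by (intro Bochner_Integration.integral_nonneg sum_nonneg mean)
  ultimately show ?thesis
    unfolding window_regret_def by linarith
qed

lemma window_regret_le_worst_regret:
  assumes "admissible K T V D" "0 < K"
  shows "window_regret K T W \<pi> D \<le> worst_regret K T W V \<pi>"
  unfolding worst_regret_def
proof (rule cSup_upper)
  show "bdd_above {window_regret K T W \<pi> D | D. admissible K T V D}"
    using window_regret_le_horizon \<open>0 < K\<close> by (fastforce simp: bdd_above_def)
qed (use assms in blast)

lemma window_optimum_block_env_ge:
  assumes \<epsilon>: "0 \<le> \<epsilon>" "\<epsilon> \<le> 1/2" and "\<forall>b. g b < K" and "0 < W" "W dvd T" "W dvd L"
  shows "T * (1/2 + \<epsilon>)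
       \<le> (\<Sum>j<T div W. Max ((\<lambda>k. \<Sum>t\<in>{j*W..<(j+1)*W}. mean (block_env \<epsilon> L g t k)) ` {..<K}))"
proof -
  have "W * (1/2 + \<epsilon>) \<le> Max ((\<lambda>k. \<Sum>t\<in>{j*W..<(j+1)*W}. mean (block_env \<epsilon> L g t k)) ` {..<K})"
    for j
  proof -
    define k where "k = g (j * W div L)"
    obtain m where "L = W * m"
      using \<open>W dvd L\<close> by blast
    have same_block: "t div L = j * W div L" if "t \<in> {j*W..<(j+1)*W}" for t
    proof -
      have "t div W = j"
        using that \<open>0 < W\<close> by (auto intro!: div_nat_eqI simp: mult.commute)
      then show ?thesis
        using \<open>0 < W\<close> by (simp add: \<open>L = W * m\<close> div_mult2_eq)
    qed
    have "mean (block_env \<epsilon> L g t k) = 1/2 + \<epsilon>" if "t \<in> {j*W..<(j+1)*W}" for t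
      using same_block[OF that] by (simp add: mean_block_env[OF \<epsilon>] k_def)
    then have "(\<Sum>t\<in>{j*W..<(j+1)*W}. mean (block_env \<epsilon> L g t k)) = W * (1/2 + \<epsilon>)"
      by simp
    moreover have "(\<Sum>t\<in>{j*W..<(j+1)*W}. mean (block_env \<epsilon> L g t k))
        \<le> Max ((\<lambda>k. \<Sum>t\<in>{j*W..<(j+1)*W}. mean (block_env \<epsilon> L g t k)) ` {..<K})"
      using \<open>\<forall>b. g b < K\<close> by (intro Max_ge) (auto simp: k_def)
    ultimately show ?thesis
      by simp
  qed
  then have "(\<Sum>j<T div W. W * (1/2 + \<epsilon>))
      \<le> (\<Sum>j<T div W. Max ((\<lambda>k. \<Sum>t\<in>{j*W..<(j+1)*W}. mean (block_env \<epsilon> L g t k)) ` {..<K}))"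
    by (intro sum_mono)
  moreover have "real (T div W) * W = T"
    using \<open>W dvd T\<close> by (simp flip: of_nat_mult)
  ultimately show ?thesis
    by (simp add: mult.assoc[symmetric])
qed

lemma exp_collected_block_env:
  assumes \<pi>: "valid_policy K \<pi>" and \<epsilon>: "0 \<le> \<epsilon>" "\<epsilon> \<le> 1/2"
  shows "exp_collected \<pi> (block_env \<epsilon> L g) T
       = T / 2 + \<epsilon> * measure_pmf.expectation (traj \<pi> (block_env \<epsilon> L g) T) (best_arm_pulls L g T)"
proof -
  have "mean (block_env \<epsilon> L g i a) = 1/2 + \<epsilon> * (if a = g (i div L) then 1 else 0)" for i a
    by (simp add: mean_block_env[OF \<epsilon>])
  then have "(\<Sum>i<T. mean (block_env \<epsilon> L g i (fst (h ! i)))) = T / 2 + \<epsilon> * best_arm_pulls L g T h" for h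
    unfolding best_arm_pulls_def by (simp only: sum.distrib sum_distrib_left) simp
  then show ?thesis
    using integrable_traj[OF \<pi> binary_rewards_block_env] by (simp add: exp_collected_def)
qed

lemma admissible_block_env:
  assumes "0 \<le> \<epsilon>" "\<epsilon> \<le> 1/2" "0 < L" "0 < K" "\<epsilon> * T / L \<le> V"
  shows "admissible K T V (block_env \<epsilon> L g)"
  unfolding admissible_def
proof
  show "\<forall>t k. set_pmf (block_env \<epsilon> L g t k) \<subseteq> {0..1}"
    using binary_rewards_block_env by (fastforce simp: binary_rewards_def)
  show "variation K T (block_env \<epsilon> L g) \<le> V"
    using variation_block_env_le[OF assms(1-4), of T g] assms(5) by linarith
qed

lemma worst_regret_ge_block_env:
  fixes K T W L :: nat
  assumes "K \<ge> 2" and \<pi>: "valid_policy K \<pi>" and "K \<le> L"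
    and "0 < W" "W dvd T" "W dvd L"
    and V: "sqrt (K / L) / 4 * T / L \<le> V"
  shows "(1/8 - sqrt (ln (4/3)) / 8) * T * sqrt (K / L) \<le> worst_regret K T W V \<pi>"
proof -
  define \<epsilon> where "\<epsilon> = sqrt (K / L) / 4"
  define s where "s = sqrt (ln (4/3::real))"
  have "0 < L"
    using \<open>K \<ge> 2\<close> \<open>K \<le> L\<close> by simp
  have "0 \<le> \<epsilon>" "\<epsilon> \<le> 1/4"
    using \<open>K \<le> L\<close> by (auto simp: \<epsilon>_def divide_le_eq_1)
  moreover have "16 * \<epsilon>\<^sup>2 * L \<le> K"
    using \<open>0 < L\<close> by (simp add: \<epsilon>_def power_divide)
  ultimately obtain g where "\<forall>b. g b < K" and few:
    "measure_pmf.expectation (traj \<pi> (block_env \<epsilon> L g) T) (best_arm_pulls L g T) \<le> (1 + s) / 2 * T"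
    using exists_block_env_few_best_arm_pulls[OF \<pi> \<open>K \<ge> 2\<close> \<open>0 < L\<close>, of \<epsilon> T] unfolding s_def by blast
  have \<epsilon>: "0 \<le> \<epsilon>" "\<epsilon> \<le> 1/2"
    using \<open>\<epsilon> \<le> 1/4\<close> \<open>0 \<le> \<epsilon>\<close> by simp_all
  have "admissible K T V (block_env \<epsilon> L g)"
    using \<epsilon> \<open>0 < L\<close> \<open>K \<ge> 2\<close> V by (intro admissible_block_env) (auto simp: \<epsilon>_def)
  have "(1/8 - s / 8) * T * sqrt (K / L) = T * (1/2 + \<epsilon>) - (T / 2 + \<epsilon> * ((1 + s) / 2 * T))"
    by (simp add: \<epsilon>_def field_simps)
  also have "\<dots> \<le> window_regret K T W \<pi> (block_env \<epsilon> L g)"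
    using window_optimum_block_env_ge[OF \<epsilon> \<open>\<forall>b. g b < K\<close> \<open>0 < W\<close> \<open>W dvd T\<close> \<open>W dvd L\<close>]
      mult_left_mono[OF few \<open>0 \<le> \<epsilon>\<close>]
    by (simp add: window_regret_def exp_collected_block_env[OF \<pi> \<epsilon>])
  also have "\<dots> \<le> worst_regret K T W V \<pi>"
    using \<open>admissible K T V (block_env \<epsilon> L g)\<close> \<open>K \<ge> 2\<close> by (intro window_regret_le_worst_regret) auto
  finally show ?thesis
    by (simp add: s_def)
qed

text \<open>At the block length \<open>A\<close> below the two regret bounds \<open>T \<surd>(K/A)\<close> and
  \<open>(KV)\<^sup>1\<^sup>/\<^sup>3 T\<^sup>2\<^sup>/\<^sup>3\<close> coincide, and blocks of length \<open>A\<close> exhaust the variation budget \<open>V\<close>.\<close>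

lemma balanced_block_length:
  fixes K T V :: real
  assumes pos: "0 < K" "0 < T" "0 < V"
  defines "A \<equiv> K powr (1/3) * (T / V) powr (2/3)"
  shows "A ^ 3 = K * (T / V)\<^sup>2"
    and "A * V = (K * V) powr (1/3) * T powr (2/3)"
    and "T * sqrt (K / A) = A * V"
proof -
  have "(K powr (1/3)) ^ 3 = K" "((T / V) powr (2/3)) ^ 3 = (T / V)\<^sup>2"
    using pos by (simp_all add: powr_power)
  then show A3: "A ^ 3 = K * (T / V)\<^sup>2"
    unfolding A_def by (simp only: power_mult_distrib)
  have "0 < A"
    using pos unfolding A_def by simp
  have "T\<^sup>2 * K = A ^ 3 * V\<^sup>2"
    using A3 \<open>0 < V\<close> by (simp add: power_divide)
  have "((K * V) powr (1/3)) ^ 3 = K * V" "(T powr (2/3)) ^ 3 = T\<^sup>2"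
    using pos by (simp_all add: powr_power)
  then have "((K * V) powr (1/3) * T powr (2/3)) ^ 3 = V * (T\<^sup>2 * K)"
    by (simp only: power_mult_distrib ac_simps)
  also have "\<dots> = (A * V) ^ 3"
    unfolding \<open>T\<^sup>2 * K = A ^ 3 * V\<^sup>2\<close> by (simp add: power_mult_distrib power2_eq_square power3_eq_cube)
  finally have "((K * V) powr (1/3) * T powr (2/3)) ^ 3 = (A * V) ^ 3" .
  then show "A * V = (K * V) powr (1/3) * T powr (2/3)"
    using power_eq_iff_eq_base[of 3 "A * V" "(K * V) powr (1/3) * T powr (2/3)"] \<open>0 < A\<close> pos by simp
  have "(T * sqrt (K / A))\<^sup>2 = T\<^sup>2 * K / A"
    using \<open>0 < A\<close> \<open>0 < K\<close> by (simp add: power_mult_distrib)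
  also have "\<dots> = (A * V)\<^sup>2"
    using \<open>T\<^sup>2 * K = A ^ 3 * V\<^sup>2\<close> \<open>0 < A\<close> by (simp add: power2_eq_square power3_eq_cube)
  finally show "T * sqrt (K / A) = A * V"
    using power_eq_iff_eq_base[of 2 "T * sqrt (K / A)" "A * V"] \<open>0 < A\<close> pos by simp
qed

lemma le_balanced_block_length:
  fixes K T V A :: real
  assumes "0 < K" "K \<le> T / V" "0 < A" "A ^ 3 = K * (T / V)\<^sup>2"
  shows "K \<le> A"
proof (rule power_le_imp_le_base)
  have "K * K\<^sup>2 \<le> K * (T / V)\<^sup>2"
    using assms by (intro mult_left_mono power_mono) auto
  then show "K ^ Suc 2 \<le> A ^ Suc 2"
    using assms by (simp add: power2_eq_square power3_eq_cube)
qed (use assms in simp)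

lemma block_variation_le_budget:
  fixes K T V A X :: real
  assumes "0 < A" "A \<le> X" "0 \<le> K" "0 \<le> T" "T * sqrt (K / A) = A * V"
  shows "sqrt (K / X) / 4 * T / X \<le> V"
proof -
  define y where "y = sqrt (K / X) * (T / X)"
  have "y \<le> sqrt (K / A) * (T / A)"
    unfolding y_def using assms by (intro mult_mono divide_left_mono real_sqrt_le_mono) auto
  also have "\<dots> = V"
    using assms by (simp add: field_simps)
  finally have "y \<le> V" .
  moreover have "0 \<le> y"
    using assms by (simp add: y_def)
  moreover have "sqrt (K / X) / 4 * T / X = y / 4"
    by (simp add: y_def)
  ultimately show ?thesis
    by linarith
qed

lemma balanced_regret_le:
  fixes K T V A L :: real
  assumes "0 < A" "0 < L" "L \<le> 2 * A" "0 \<le> K" "0 \<le> T" "T * sqrt (K / A) = A * V"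
  shows "A * V / 3 \<le> T * sqrt (K / L)"
proof -
  have "sqrt (K / A) = sqrt 2 * sqrt (K / (2 * A))"
    by (simp flip: real_sqrt_mult)
  also have "\<dots> \<le> 3 * sqrt (K / L)"
    using assms sqrt2_less_2 by (intro mult_mono real_sqrt_le_mono divide_left_mono) auto
  finally have "T * sqrt (K / A) \<le> T * (3 * sqrt (K / L))"
    using \<open>0 \<le> T\<close> by (rule mult_left_mono)
  then show ?thesis
    using assms by simp
qed

lemma exists_multiple_between:
  fixes A :: real and W :: nat
  assumes "0 < W" "W \<le> A"
  shows "\<exists>L. W dvd L \<and> A \<le> L \<and> L \<le> 2 * A"
proof (intro exI conjI)
  define m where "m = nat \<lceil>A / W\<rceil>"
  have m: "real m = \<lceil>A / W\<rceil>"
    using assms by (simp add: m_def)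
  show "W dvd W * m"
    by simp
  have "A / W \<le> m" "m < A / W + 1"
    using m by linarith+
  then show "A \<le> real (W * m)" "real (W * m) \<le> 2 * A"
    using assms by (simp_all add: field_simps)
qed

lemma worst_regret_ge_long_blocks:
  fixes K T W L :: nat and A V :: real
  assumes "K \<ge> 2" and \<pi>: "valid_policy K \<pi>" and "0 < W" "W dvd T" "W dvd L"
    and "K \<le> A" "A \<le> L" and balanced: "T * sqrt (K / A) = A * V"
  shows "(1/8 - sqrt (ln (4/3)) / 8) * T * sqrt (K / L) \<le> worst_regret K T W V \<pi>"
proof (rule worst_regret_ge_block_env[OF \<open>K \<ge> 2\<close> \<pi> _ \<open>0 < W\<close> \<open>W dvd T\<close> \<open>W dvd L\<close>])
  have "real K \<le> real L"
    using \<open>K \<le> A\<close> \<open>A \<le> L\<close> by simp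
  then show "K \<le> L"
    by simp
  show "sqrt (real K / real L) / 4 * real T / real L \<le> V"
    using \<open>K \<ge> 2\<close> \<open>K \<le> A\<close> \<open>A \<le> L\<close> by (intro block_variation_le_budget[OF _ _ _ _ balanced]) auto
qed

theorem corollary4p2:
  fixes K T W :: nat and V :: real and \<pi> :: policy
  assumes "K \<ge> 2" and "T \<ge> K" and "0 < V" and "V \<le> real T / real K"
    and "W \<ge> 1" and "W dvd T"
    and "valid_policy K \<pi>"
  defines "c \<equiv> 1/8 - sqrt (ln (4/3)) / 8"
  shows "(real W \<le> real K powr (1/3) * (real T / V) powr (2/3) \<longrightarrow>
            worst_regret K T W V \<pi> \<ge> c / 3 * (real K * V) powr (1/3) * real T powr (2/3))
       \<and> (real W \<ge> real K powr (1/3) * (real T / V) powr (2/3) \<longrightarrow>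
            worst_regret K T W V \<pi> \<ge> c * real T * sqrt (real K / real W))"
proof -
  define A where "A = real K powr (1/3) * (real T / V) powr (2/3)"
  have pos: "0 < real K" "0 < real T" "0 < A"
    using assms(1,2) \<open>0 < V\<close> by (simp_all add: A_def)
  note balanced = balanced_block_length[OF pos(1,2) \<open>0 < V\<close>, folded A_def]
  have "real K \<le> A"
    using le_balanced_block_length[OF pos(1) _ pos(3) balanced(1)] assms(4) pos \<open>0 < V\<close>
    by (simp add: field_simps)
  note regret = worst_regret_ge_long_blocks[OF assms(1,7) _ \<open>W dvd T\<close> _ \<open>K \<le> A\<close> _ balanced(3),
      folded c_def]
  show ?thesis
  proof (intro conjI impI)
    assume "real W \<le> real K powr (1/3) * (real T / V) powr (2/3)"
    then obtain L where "W dvd L" "A \<le> L" "L \<le> 2 * A"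
      using exists_multiple_between[of W A] assms(5) by (auto simp: A_def)
    moreover have "c \<ge> 0"
      using ln_le_minus_one[of "4/3::real"] by (simp add: c_def real_sqrt_le_1_iff)
    ultimately show "c / 3 * (real K * V) powr (1/3) * real T powr (2/3) \<le> worst_regret K T W V \<pi>"
      using regret[of L] balanced_regret_le[OF pos(3) _ _ _ _ balanced(3), of L] balanced(2) assms(5)
        mult_left_mono[of "A * V / 3" "T * sqrt (K / L)" c] by (fastforce simp: mult.assoc)
  next
    assume "real K powr (1/3) * (real T / V) powr (2/3) \<le> real W"
    then show "c * real T * sqrt (real K / real W) \<le> worst_regret K T W V \<pi>"
      using regret[of W] assms(5) by (simp add: A_def)
  qed
qed

end
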